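(* Let $(R_j)_{j=1}^\infty$ be a sequence of positive reals with $\inf_{j\ge1}R_j>0$, and for each $d$ let ${\bf R}=(R_1,\dots,R_d)$. Let $\alpha,\beta>0$. Then each of the approximation problems $\{I_d: W_2^{\bf R}(\mathbb T^d)\to L_2(\mathbb T^d)\}_{d\in\mathbb N_+}$ and $\{I_d: W_2^{\infty}(\mathbb T^d)\to L_2(\mathbb T^d)\}_{d\in\mathbb N_+}$ is $(\alpha,\beta)$-weakly tractable if and only if ($\alpha>2$ and $\beta>0$) or ($\alpha>0$ and $\beta>1$). In particular, both problems are intractable (not weakly tractable).
   Context: $W_2^{\bf R}(\mathbb T^d)$: Hilbert space of $f\in L_2(\mathbb T^d)$ (normalized measure) with norm $\big(\sum_{{\bf k}\in\mathbb Z^d}(1+\sum_{j=1}^d|k_j|^{2R_j})|\hat f({\bf k})|^2\big)^{1/2}$. $W_2^\infty(\mathbb T^d)$: trigonometric polynomials $\sum_{{\bf k}\in\{-1,0,1\}^d}\hat f({\bf k})e^{i{\bf k}\cdot{\bf x}}$ with norm $\big(\sum_{{\bf k}\in\{-1,0,1\}^d}(1+\sum_j|k_j|)|\hat f({\bf k})|^2\big)^{1/2}$ (the space $\bigwedge_{{\bf m}\in\mathbb N_+^d}W_2^{\bf m}(\mathbb T^d)$ with sup norm). For the identity embedding $I_d:H_d\to L_2(\mathbb T^d)$ (which has norm 1), the $n$th minimal worst-case error is $e(n,d)=a_{n+1}(I_d)$, where $a_n(T)=\inf\{\|T-A\|:\operatorname{rank}A<n\}$, and the information complexity is $n(\varepsilon,d)=\min\{n\in\mathbb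 N: e(n,d)\le\varepsilon\}$ for $\varepsilon\in(0,1)$. The problem is $(\alpha,\beta)$-weakly tractable if $\lim_{\varepsilon^{-1}+d\to\infty}\frac{\ln n(\varepsilon,d)}{\varepsilon^{-\alpha}+d^\beta}=0$; weakly tractable means $(1,1)$-weakly tractable, and intractable means not weakly tractable. *)

theory Defs
  imports "HOL-Analysis.Analysis"
begin

text \<open>Frequencies k in Z^d are modelled as integer lists of length d.
  By Parseval, L_2(T^d) is identified with square-summable coefficient
  functions on Z^d, and a Fourier-weighted Hilbert space H_d with support set S
  and weight w is identified with coefficient functions c supported on S with
  finite weighted norm. The identity embedding is then c maps to c.\<close>

definition idx :: "nat \<Rightarrow> int list set" where
  "idx d = {k. length k = d}"

definition cube :: "nat \<Rightarrow> int list set" where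
  "cube d = {k. length k = d \<and> set k \<subseteq> {-1, 0, 1}}"

text \<open>Weight of W_2^R: 1 + sum_j |k_j|^(2 R_j); coordinate j (0-based) uses R j.\<close>
definition wR :: "(nat \<Rightarrow> real) \<Rightarrow> int list \<Rightarrow> real" where
  "wR R k = 1 + (\<Sum>j<length k. \<bar>real_of_int (k ! j)\<bar> powr (2 * R j))"

definition winf :: "int list \<Rightarrow> real" where
  "winf k = 1 + (\<Sum>j<length k. \<bar>real_of_int (k ! j)\<bar>)"

definition wspace :: "int list set \<Rightarrow> (int list \<Rightarrow> real) \<Rightarrow> (int list \<Rightarrow> complex) set" where
  "wspace S w = {c. (\<forall>k. k \<notin> S \<longrightarrow> c k = 0) \<and>
                    (\<lambda>k. w k * (cmod (c k))\<^sup>2) summable_on S}"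

definition wnorm :: "int list set \<Rightarrow> (int list \<Rightarrow> real) \<Rightarrow> (int list \<Rightarrow> complex) \<Rightarrow> real" where
  "wnorm S w c = sqrt (\<Sum>\<^sub>\<infinity>k\<in>S. w k * (cmod (c k))\<^sup>2)"

text \<open>L_2 norm (via Parseval, with normalized measure).\<close>
definition l2norm :: "(int list \<Rightarrow> complex) \<Rightarrow> real" where
  "l2norm f = sqrt (\<Sum>\<^sub>\<infinity>k\<in>UNIV. (cmod (f k))\<^sup>2)"

definition rank_le_ops :: "int list set \<Rightarrow> (int list \<Rightarrow> real) \<Rightarrow> nat
    \<Rightarrow> ((int list \<Rightarrow> complex) \<Rightarrow> (int list \<Rightarrow> complex)) set" where
  "rank_le_ops S w m = {A.
     (\<forall>c\<in>wspace S w. \<forall>c'\<in>wspace S w. \<forall>a b :: complex.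
        A (\<lambda>k. a * c k + b * c' k) = (\<lambda>k. a * A c k + b * A c' k)) \<and>
     (\<exists>v :: nat \<Rightarrow> int list \<Rightarrow> complex.
        (\<forall>i<m. (\<lambda>k. (cmod (v i k))\<^sup>2) summable_on UNIV) \<and>
        (\<forall>c\<in>wspace S w. \<exists>a :: nat \<Rightarrow> complex. A c = (\<lambda>k. \<Sum>i<m. a i * v i k)))}"

definition err_norm :: "int list set \<Rightarrow> (int list \<Rightarrow> real)
    \<Rightarrow> ((int list \<Rightarrow> complex) \<Rightarrow> (int list \<Rightarrow> complex)) \<Rightarrow> ereal" where
  "err_norm S w A = (SUP c\<in>{c\<in>wspace S w. wnorm S w c \<le> 1}.
                       ereal (l2norm (\<lambda>k. c k - A c k)))"

definition approx_num :: "int list set \<Rightarrow> (int list \<Rightarrow> real) \<Rightarrow> nat \<Rightarrow> ereal" where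
  "approx_num S w n = (INF A\<in>rank_le_ops S w (n - 1). err_norm S w A)"

definition min_err :: "int list set \<Rightarrow> (int list \<Rightarrow> real) \<Rightarrow> nat \<Rightarrow> ereal" where
  "min_err S w n = approx_num S w (Suc n)"

definition eR :: "(nat \<Rightarrow> real) \<Rightarrow> nat \<Rightarrow> nat \<Rightarrow> ereal" where
  "eR R n d = min_err (idx d) (wR R) n"

definition einf :: "nat \<Rightarrow> nat \<Rightarrow> ereal" where
  "einf n d = min_err (cube d) winf n"

definition info_compl :: "(nat \<Rightarrow> nat \<Rightarrow> ereal) \<Rightarrow> real \<Rightarrow> nat \<Rightarrow> nat" where
  "info_compl e \<epsilon> d = (LEAST n. e n d \<le> ereal \<epsilon>)"

definition ab_weakly_tractable :: "(nat \<Rightarrow> nat \<Rightarrow> ereal) \<Rightarrow> real \<Rightarrow> real \<Rightarrow> bool" where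
  "ab_weakly_tractable e \<alpha> \<beta> \<longleftrightarrow>
     (\<forall>\<delta>>0. \<exists>M. \<forall>\<epsilon> d. 0 < \<epsilon> \<and> \<epsilon> < 1 \<and> 1 \<le> d \<and> 1 / \<epsilon> + real d > M \<longrightarrow>
        \<bar>ln (real (info_compl e \<epsilon> d)) / (\<epsilon> powr (- \<alpha>) + real d powr \<beta>)\<bar> < \<delta>)"

definition weakly_tractable :: "(nat \<Rightarrow> nat \<Rightarrow> ereal) \<Rightarrow> bool" where
  "weakly_tractable e \<longleftrightarrow> ab_weakly_tractable e 1 1"

end

theory Submission
  imports Defs "HOL-Library.Function_Algebras" "HOL-Real_Asymp.Real_Asymp"
begin

text \<open>
  The minimal errors of a diagonal embedding are the numbers \<open>1 / sqrt w\<close>, with the weights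
  \<open>w\<close> sorted increasingly: truncating to the frequencies of weight below \<open>t\<close> has error at most
  \<open>1 / sqrt t\<close>, while every operator of smaller rank annihilates a nonzero combination of the
  frequencies of weight at most \<open>t\<close>. Hence \<open>n(\<epsilon>, d)\<close> is at most the number of frequencies of
  weight below \<open>\<epsilon>\<^sup>-\<^sup>2\<close>. Such a frequency has fewer than \<open>\<epsilon>\<^sup>-\<^sup>2\<close> nonzero entries, each of modulus
  at most \<open>\<epsilon>\<^sup>-\<^sup>1\<^sup>/\<^sup>r\<close> where \<open>r = inf R\<^sub>j\<close>, so \<open>ln n(\<epsilon>, d)\<close> is bounded both by
  \<open>d ln (3 \<epsilon>\<^sup>-\<^sup>1\<^sup>/\<^sup>r)\<close> and by \<open>\<epsilon>\<^sup>-\<^sup>2 ln (4 d \<epsilon>\<^sup>-\<^sup>1\<^sup>/\<^sup>r)\<close>; the first bound is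
  \<open>o(\<epsilon>\<^sup>-\<^sup>\<alpha> + d\<^sup>\<beta>)\<close> when \<open>\<beta> > 1\<close>, the second when \<open>\<alpha> > 2\<close>. Conversely, the \<open>3\<^sup>d\<close> frequencies
  in \<open>{-1, 0, 1}\<^sup>d\<close> have weight at most \<open>1 + d\<close> in both spaces, so
  \<open>ln n((d + 2)\<^sup>-\<^sup>1\<^sup>/\<^sup>2, d) \<ge> d ln 3\<close>, whereas \<open>\<epsilon>\<^sup>-\<^sup>\<alpha> + d\<^sup>\<beta> \<le> 4 d\<close> there when \<open>\<alpha> \<le> 2\<close>
  and \<open>\<beta> \<le> 1\<close>.
\<close>

section \<open>Approximation numbers of diagonal embeddings\<close>

lemma sum_fun_apply: "(\<Sum>x\<in>A. f x) k = (\<Sum>x\<in>A. f x k)"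
  by (induction A rule: infinite_finite_induct) auto

lemma (in vector_space) nontrivial_relation_if_card_gt:
  assumes "finite F" "finite B" "g ` F \<subseteq> span B" "card B < card F"
  shows "\<exists>u. (\<exists>x\<in>F. u x \<noteq> 0) \<and> (\<Sum>x\<in>F. scale (u x) (g x)) = 0"
proof (cases "inj_on g F")
  case True
  have "dependent (g ` F)"
    using independent_span_bound[OF assms(2) _ assms(3)] assms(4) card_image[OF True] by auto
  then obtain u where u: "\<exists>v\<in>g ` F. u v \<noteq> 0" "(\<Sum>v\<in>g ` F. scale (u v) v) = 0"
    using dependent_finite[of "g ` F"] finite_imageI[OF assms(1)] by blast
  have "(\<Sum>x\<in>F. scale (u (g x)) (g x)) = 0"
    using u(2) sum.reindex[OF True, of "\<lambda>v. scale (u v) v"] by simp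
  moreover have "\<exists>x\<in>F. u (g x) \<noteq> 0" using u(1) by blast
  ultimately show ?thesis by (intro exI[of _ "\<lambda>x. u (g x)"]) simp
next
  case False
  then obtain x y where xy: "x \<in> F" "y \<in> F" "x \<noteq> y" "g x = g y"
    unfolding inj_on_def by blast
  define u where "u z = (if z = x then 1 else if z = y then -1 else 0 :: 'a)" for z
  have "(\<Sum>z\<in>F. scale (u z) (g z)) = (\<Sum>z\<in>{x, y}. scale (u z) (g z))"
    using assms(1) xy by (intro sum.mono_neutral_right) (auto simp: u_def)
  also have "\<dots> = 0" using xy by (simp add: u_def)
  finally show ?thesis using xy by (intro exI[of _ u]) (auto simp: u_def)
qed

lemma wspace_finite_support:
  assumes "finite F" "F \<subseteq> S" "\<And>k. k \<notin> F \<Longrightarrow> c k = 0"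
  shows "c \<in> wspace S w"
  unfolding wspace_def
proof (intro CollectI conjI)
  show "\<forall>k. k \<notin> S \<longrightarrow> c k = 0" using assms by auto
  have "{k\<in>S. w k * (cmod (c k))\<^sup>2 \<noteq> 0} \<subseteq> F" using assms by auto
  then have "finite {k\<in>S. w k * (cmod (c k))\<^sup>2 \<noteq> 0}"
    using assms(1) by (rule finite_subset)
  then show "(\<lambda>k. w k * (cmod (c k))\<^sup>2) summable_on S"
    by (rule finite_nonzero_values_imp_summable_on)
qed

lemma infsum_finite_support:
  assumes "finite F" "F \<subseteq> A" "\<And>k. k \<in> A - F \<Longrightarrow> f k = 0"
  shows "infsum f A = sum f F"
proof -
  have "infsum f A = infsum f F"
    by (rule infsum_cong_neutral) (use assms in auto)
  then show ?thesis using assms(1) by simp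
qed

lemma rank_le_ops_linear:
  assumes "A \<in> rank_le_ops S w n" "c \<in> wspace S w" "c' \<in> wspace S w"
  shows "A (\<lambda>k. a * c k + b * c' k) = (\<lambda>k. a * A c k + b * A c' k)"
  using assms by (auto simp: rank_le_ops_def)

lemma rank_le_ops_finite_sum:
  assumes A: "A \<in> rank_le_ops S w n" and "finite F" "F \<subseteq> S"
  shows "A (\<lambda>k. if k \<in> F then u k else 0) = (\<lambda>k. \<Sum>x\<in>F. u x * A (indicator {x}) k)"
  using assms(2,3)
proof (induction F rule: finite_induct)
  case empty
  have "(0 :: int list \<Rightarrow> complex) \<in> wspace S w"
    by (rule wspace_finite_support[of "{}"]) auto
  from rank_le_ops_linear[OF A this this, of 0 0] show ?case by simp
next
  case (insert x F)
  have ind: "indicator {x} \<in> wspace S w"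
    using insert.prems by (intro wspace_finite_support[of "{x}"]) auto
  have rest: "(\<lambda>k. if k \<in> F then u k else 0) \<in> wspace S w"
    using insert by (intro wspace_finite_support[of F]) auto
  have split: "(\<lambda>k. if k \<in> insert x F then u k else 0)
      = (\<lambda>k. u x * indicator {x} k + 1 * (if k \<in> F then u k else 0))"
    using insert.hyps by (auto simp: fun_eq_iff indicator_def)
  have IH: "A (\<lambda>k. if k \<in> F then u k else 0) = (\<lambda>k. \<Sum>y\<in>F. u y * A (indicator {y}) k)"
    using insert.IH insert.prems by simp
  have "A (\<lambda>k. if k \<in> insert x F then u k else 0)
      = (\<lambda>k. u x * A (indicator {x}) k + 1 * A (\<lambda>k. if k \<in> F then u k else 0) k)"
    unfolding split by (rule rank_le_ops_linear[OF A ind rest])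
  also have "\<dots> = (\<lambda>k. \<Sum>y\<in>insert x F. u y * A (indicator {y}) k)"
    unfolding IH using insert.hyps by simp
  finally show ?case .
qed

lemma rank_le_ops_kernel:
  assumes A: "A \<in> rank_le_ops S w n" and F: "finite F" "F \<subseteq> S" "n < card F"
  obtains c where "\<And>k. k \<notin> F \<Longrightarrow> c k = 0" "c \<noteq> 0" "A c = 0"
proof -
  interpret V: vector_space "\<lambda>(a::complex) (f::int list \<Rightarrow> complex) k. a * f k"
    by unfold_locales (auto simp: algebra_simps fun_eq_iff)
  obtain v where v: "\<And>c. c \<in> wspace S w \<Longrightarrow> \<exists>a. A c = (\<lambda>k. \<Sum>i<n. a i * v i k)"
    using A unfolding rank_le_ops_def by blast
  have span: "(\<lambda>x. A (indicator {x})) ` F \<subseteq> V.span (v ` {..<n})"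
  proof clarify
    fix x assume "x \<in> F"
    then have "indicator {x} \<in> wspace S w"
      using F by (intro wspace_finite_support[of "{x}"]) auto
    then obtain a where "A (indicator {x}) = (\<lambda>k. \<Sum>i<n. a i * v i k)" using v by blast
    then have eq: "A (indicator {x}) = (\<Sum>i<n. (\<lambda>k. a i * v i k))"
      by (simp add: fun_eq_iff sum_fun_apply)
    have "(\<lambda>k. a i * v i k) \<in> V.span (v ` {..<n})" if "i < n" for i
      using V.span_scale[OF V.span_base, of "v i" "v ` {..<n}" "a i"] that by simp
    then show "A (indicator {x}) \<in> V.span (v ` {..<n})"
      unfolding eq by (intro V.span_sum) simp
  qed
  have card: "card (v ` {..<n}) < card F"
    using card_image_le[of "{..<n}" v] F(3) by simp
  obtain u where u: "\<exists>x\<in>F. u x \<noteq> 0" "(\<Sum>x\<in>F. (\<lambda>k. u x * A (indicator {x}) k)) = 0"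
    using V.nontrivial_relation_if_card_gt[OF F(1) finite_imageI[OF finite_lessThan] span card]
    by blast
  define c where "c k = (if k \<in> F then u k else 0)" for k
  have "A c = (\<lambda>k. \<Sum>x\<in>F. u x * A (indicator {x}) k)"
    unfolding c_def by (rule rank_le_ops_finite_sum[OF A F(1,2)])
  also have "\<dots> = (\<Sum>x\<in>F. (\<lambda>k. u x * A (indicator {x}) k))"
    by (simp add: fun_eq_iff sum_fun_apply)
  finally have "A c = 0" using u(2) by simp
  moreover have "c \<noteq> 0" using u(1) by (auto simp: c_def fun_eq_iff)
  ultimately show ?thesis using that[of c] by (simp add: c_def)
qed

lemma min_err_eq_INF: "min_err S w n = (INF A\<in>rank_le_ops S w n. err_norm S w A)"
  by (simp add: min_err_def approx_num_def)

lemma truncation_in_rank_le_ops: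
  assumes "finite F" "card F \<le> n"
  shows "(\<lambda>c k. if k \<in> F then c k else 0) \<in> rank_le_ops S w n"
proof -
  obtain f where f: "bij_betw f {..<card F} F"
    using ex_bij_betw_nat_finite[OF assms(1)] atLeast0LessThan by metis
  define v :: "nat \<Rightarrow> int list \<Rightarrow> complex"
    where "v i = (if i < card F then indicator {f i} else 0)" for i
  have rep: "(if k \<in> F then c k else 0) = (\<Sum>i<n. c (f i) * v i k)"
    for c :: "int list \<Rightarrow> complex" and k
  proof -
    have "(\<Sum>i<n. c (f i) * v i k) = (\<Sum>i<card F. c (f i) * indicator {f i} k)"
      using assms(2) by (intro sum.mono_neutral_cong_right) (auto simp: v_def)
    also have "\<dots> = (\<Sum>x\<in>F. c x * indicator {x} k)"
      using sum.reindex_bij_betw[OF f, of "\<lambda>x. c x * indicator {x} k"] by simp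
    also have "\<dots> = (if k \<in> F then c k else 0)"
      using assms(1) by (simp add: indicator_def)
    finally show ?thesis by simp
  qed
  show ?thesis
    unfolding rank_le_ops_def
  proof (intro CollectI conjI exI[of _ v] ballI allI impI)
    fix c :: "int list \<Rightarrow> complex"
    show "\<exists>a. (\<lambda>k. if k \<in> F then c k else 0) = (\<lambda>k. \<Sum>i<n. a i * v i k)"
      by (intro exI[of _ "\<lambda>i. c (f i)"]) (simp only: rep)
  next
    show "(\<lambda>k. (cmod (v i k))\<^sup>2) summable_on UNIV" for i
      by (rule finite_nonzero_values_imp_summable_on)
         (rule finite_subset[of _ "{f i}"], auto simp: v_def indicator_def)
  next
    show "(\<lambda>k. if k \<in> F then a * c k + b * c' k else 0)
        = (\<lambda>k. a * (if k \<in> F then c k else 0) + b * (if k \<in> F then c' k else 0))"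
      for a b :: complex and c c' :: "int list \<Rightarrow> complex"
      by (simp add: fun_eq_iff)
  qed
qed

lemma truncation_error_le:
  assumes w0: "\<forall>k\<in>S. 0 \<le> w k" and t: "0 < t" and c: "c \<in> wspace S w" "wnorm S w c \<le> 1"
  shows "l2norm (\<lambda>k. c k - (if w k < t then c k else 0)) \<le> 1 / sqrt t"
proof -
  have c0: "\<And>k. k \<notin> S \<Longrightarrow> c k = 0"
    and summable: "(\<lambda>k. w k * (cmod (c k))\<^sup>2) summable_on S"
    using c(1) by (auto simp: wspace_def)
  define g where "g = (\<lambda>k. (cmod (c k - (if w k < t then c k else 0)))\<^sup>2)"
  have g_le: "g k \<le> w k * (cmod (c k))\<^sup>2 * (1 / t)" if "k \<in> S" for k
    using w0 that t by (auto simp: g_def field_simps mult_right_mono)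
  have summable': "(\<lambda>k. w k * (cmod (c k))\<^sup>2 * (1 / t)) summable_on S"
    using summable_on_cmult_left[OF summable] .
  have "infsum g UNIV = infsum g S"
    by (rule infsum_cong_neutral) (auto simp: g_def c0)
  also have "\<dots> \<le> (\<Sum>\<^sub>\<infinity>k\<in>S. w k * (cmod (c k))\<^sup>2 * (1 / t))"
    using g_le summable' w0 t
    by (intro infsum_mono summable_on_comparison_test[OF summable']) (auto simp: g_def)
  also have "\<dots> = (\<Sum>\<^sub>\<infinity>k\<in>S. w k * (cmod (c k))\<^sup>2) * (1 / t)"
    by (rule infsum_cmult_left')
  also have "\<dots> \<le> 1 * (1 / t)"
    using c(2) t by (intro mult_right_mono) (auto simp: wnorm_def)
  finally have "infsum g UNIV \<le> 1 / t" by simp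
  then have "sqrt (infsum g UNIV) \<le> sqrt (1 / t)" by (rule real_sqrt_le_mono)
  then show ?thesis by (simp add: l2norm_def g_def real_sqrt_divide)
qed

lemma min_err_le_inverse_sqrt:
  assumes w0: "\<forall>k\<in>S. 0 \<le> w k" and t: "0 < t"
    and fin: "finite {k\<in>S. w k < t}" and card: "card {k\<in>S. w k < t} \<le> n"
  shows "min_err S w n \<le> ereal (1 / sqrt t)"
proof -
  define P where "P c k = (if k \<in> {k\<in>S. w k < t} then c k else 0)"
    for c :: "int list \<Rightarrow> complex" and k
  have "P \<in> rank_le_ops S w n"
    unfolding P_def by (rule truncation_in_rank_le_ops[OF fin card])
  moreover have "err_norm S w P \<le> ereal (1 / sqrt t)"
    unfolding err_norm_def
  proof (rule SUP_least)
    fix c assume c: "c \<in> {c \<in> wspace S w. wnorm S w c \<le> 1}"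
    then have "P c = (\<lambda>k. if w k < t then c k else 0)"
      by (auto simp: P_def wspace_def fun_eq_iff)
    then show "ereal (l2norm (\<lambda>k. c k - P c k)) \<le> ereal (1 / sqrt t)"
      using truncation_error_le[OF w0 t] c by simp
  qed
  ultimately show ?thesis
    unfolding min_err_eq_INF by (meson INF_lower order_trans)
qed

lemma err_norm_ge_inverse_sqrt:
  assumes A: "A \<in> rank_le_ops S w n" and F: "finite F" "F \<subseteq> S"
    and w: "\<forall>k\<in>F. w k \<le> t" and t: "0 < t"
    and c0: "\<And>k. k \<notin> F \<Longrightarrow> c k = 0" and "c \<noteq> 0" and Ac: "A c = 0"
  shows "ereal (1 / sqrt t) \<le> err_norm S w A"
proof -
  have c: "c \<in> wspace S w"
    using F c0 by (rule wspace_finite_support)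
  define q where "q = (\<Sum>k\<in>F. (cmod (c k))\<^sup>2)"
  obtain k1 where "c k1 \<noteq> 0" using \<open>c \<noteq> 0\<close> by (auto simp: fun_eq_iff)
  then have "k1 \<in> F" using c0 by auto
  have "q > 0" unfolding q_def
    by (rule sum_pos2[OF F(1) \<open>k1 \<in> F\<close>]) (use \<open>c k1 \<noteq> 0\<close> in auto)
  define r where "r = 1 / sqrt (t * q)"
  \<comment> \<open>the linearity clause of \<open>rank_le_ops\<close> only speaks of two-term combinations\<close>
  define c' where "c' = (\<lambda>k. complex_of_real r * c k + 0 * c k)"
  have "A c' = (\<lambda>k. complex_of_real r * A c k + 0 * A c k)"
    unfolding c'_def by (rule rank_le_ops_linear[OF A c c])
  then have Ac': "A c' = (\<lambda>k. 0)" using Ac by simp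
  have c'0: "\<And>k. k \<notin> F \<Longrightarrow> c' k = 0" using c0 by (simp add: c'_def)
  have c': "c' \<in> wspace S w"
    using F c'0 by (rule wspace_finite_support)
  have sq: "(cmod (c' k))\<^sup>2 = r\<^sup>2 * (cmod (c k))\<^sup>2" for k
    by (simp add: c'_def norm_mult power_mult_distrib)
  have "wnorm S w c' = sqrt (\<Sum>k\<in>F. w k * (cmod (c' k))\<^sup>2)"
    unfolding wnorm_def by (subst infsum_finite_support[OF F]) (use c'0 in auto)
  also have "\<dots> \<le> sqrt (\<Sum>k\<in>F. t * (r\<^sup>2 * (cmod (c k))\<^sup>2))"
    using w by (intro real_sqrt_le_mono sum_mono) (auto simp: sq intro: mult_right_mono)
  also have "\<dots> = sqrt (t * r\<^sup>2 * q)" by (simp add: q_def sum_distrib_left mult.assoc)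
  also have "\<dots> = 1" using t \<open>q > 0\<close> by (simp add: r_def power_divide)
  finally have "wnorm S w c' \<le> 1" .
  have "l2norm (\<lambda>k. c' k - A c' k) = sqrt (\<Sum>k\<in>F. (cmod (c' k))\<^sup>2)"
    unfolding l2norm_def Ac' by (subst infsum_finite_support[OF F(1)]) (use c'0 in auto)
  also have "\<dots> = sqrt (r\<^sup>2 * q)" by (simp add: sq q_def sum_distrib_left)
  also have "\<dots> = 1 / sqrt t" using t \<open>q > 0\<close> by (simp add: r_def power_divide real_sqrt_divide)
  finally have "ereal (1 / sqrt t) = ereal (l2norm (\<lambda>k. c' k - A c' k))" by simp
  also have "\<dots> \<le> err_norm S w A"
    unfolding err_norm_def by (rule SUP_upper) (use c' \<open>wnorm S w c' \<le> 1\<close> in auto)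
  finally show ?thesis .
qed

lemma min_err_ge_inverse_sqrt:
  assumes F: "finite F" "F \<subseteq> S" "n < card F" and w: "\<forall>k\<in>F. w k \<le> t" and t: "0 < t"
  shows "ereal (1 / sqrt t) \<le> min_err S w n"
  unfolding min_err_eq_INF
proof (rule INF_greatest)
  fix A assume A: "A \<in> rank_le_ops S w n"
  obtain c where "\<And>k. k \<notin> F \<Longrightarrow> c k = 0" "c \<noteq> 0" "A c = 0"
    using rank_le_ops_kernel[OF A F] by blast
  then show "ereal (1 / sqrt t) \<le> err_norm S w A"
    using err_norm_ge_inverse_sqrt[OF A F(1,2) w t] by blast
qed

section \<open>Counting frequencies of small weight\<close>

definition nnz :: "'a::zero list \<Rightarrow> nat" where
  "nnz k = card {j. j < length k \<and> k ! j \<noteq> 0}"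

definition nonzero_entries :: "'a::zero list \<Rightarrow> (nat \<times> 'a) list" where
  "nonzero_entries k = filter (\<lambda>p. snd p \<noteq> 0) (zip [0..<length k] k)"

lemma length_nonzero_entries: "length (nonzero_entries k) = nnz k"
  by (auto simp: nonzero_entries_def nnz_def length_filter_conv_card intro!: arg_cong[where f = card])

lemma set_nonzero_entries:
  "set (nonzero_entries k) = {(j, k ! j) | j. j < length k \<and> k ! j \<noteq> 0}"
  by (auto simp: nonzero_entries_def set_zip) (metis add_0 nth_upt)

lemma nonzero_entries_inj:
  assumes "length k = length k'" "nonzero_entries k = nonzero_entries k'"
  shows "k = k'"
proof (rule nth_equalityI)
  show "length k = length k'" by fact
  have graph: "{(j, k ! j) | j. j < length k \<and> k ! j \<noteq> 0} = {(j, k' ! j) | j. j < length k \<and> k' ! j \<noteq> 0}"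
    using assms set_nonzero_entries[of k] set_nonzero_entries[of k'] by simp
  fix j assume j: "j < length k"
  have "k' ! j = k ! j" if "k ! j \<noteq> 0"
  proof -
    have "(j, k ! j) \<in> {(j, k' ! j) | j. j < length k \<and> k' ! j \<noteq> 0}"
      using j that unfolding graph[symmetric] by blast
    then show ?thesis by auto
  qed
  moreover have "k ! j = k' ! j" if "k' ! j \<noteq> 0"
  proof -
    have "(j, k' ! j) \<in> {(j, k ! j) | j. j < length k \<and> k ! j \<noteq> 0}"
      using j that unfolding graph by blast
    then show ?thesis by auto
  qed
  ultimately show "k ! j = k' ! j" by fastforce
qed

lemma sum_powers_le_Suc_power: "(\<Sum>i\<le>s. N ^ i) \<le> (N + 1 :: nat) ^ s"
proof -
  have "(\<Sum>i\<le>s. N ^ i) \<le> (\<Sum>i\<le>s. (s choose i) * N ^ i * 1 ^ (s - i))"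
    by (intro sum_mono) (simp add: Suc_leI)
  also have "\<dots> = (N + 1) ^ s" using binomial[of N 1 s] by simp
  finally show ?thesis .
qed

lemma card_sparse_lists_le:
  assumes "finite Y"
  shows "card {k. length k = d \<and> set k \<subseteq> Y \<and> nnz k \<le> s} \<le> (d * card Y + 1) ^ s"
proof -
  let ?K = "{k. length k = d \<and> set k \<subseteq> Y \<and> nnz k \<le> s}"
  let ?L = "{xs. set xs \<subseteq> {..<d} \<times> Y \<and> length xs \<le> s}"
  have "inj_on nonzero_entries ?K"
    by (auto intro!: inj_onI nonzero_entries_inj)
  then have "card ?K = card (nonzero_entries ` ?K)"
    by (rule card_image[symmetric])
  also have "\<dots> \<le> card ?L"
  proof (rule card_mono)
    show "finite ?L" using assms by (intro finite_lists_length_le) auto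
    show "nonzero_entries ` ?K \<subseteq> ?L"
      by (auto simp: set_nonzero_entries length_nonzero_entries)
  qed
  also have "card ?L = (\<Sum>i\<le>s. (d * card Y) ^ i)"
    using assms by (simp add: card_lists_length_le card_cartesian_product)
  also have "\<dots> \<le> (d * card Y + 1) ^ s"
    by (rule sum_powers_le_Suc_power)
  finally show ?thesis .
qed

lemma nnz_le_wR:
  assumes "\<forall>j. 0 \<le> R j"
  shows "1 + real (nnz k) \<le> wR R k"
proof -
  have "real (nnz k) = (\<Sum>j<length k. if k ! j \<noteq> 0 then 1 else 0)"
    by (simp add: nnz_def sum.If_cases Int_def conj_commute)
  also have "\<dots> \<le> (\<Sum>j<length k. \<bar>real_of_int (k ! j)\<bar> powr (2 * R j))"
  proof (rule sum_mono)
    fix j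
    show "(if k ! j \<noteq> 0 then 1 else 0) \<le> \<bar>real_of_int (k ! j)\<bar> powr (2 * R j)"
      using assms ge_one_powr_ge_zero[of "\<bar>real_of_int (k ! j)\<bar>" "2 * R j"] by auto
  qed
  finally show ?thesis unfolding wR_def by simp
qed

lemma abs_nth_le_of_wR_less:
  assumes r: "0 < r" "\<forall>j. r \<le> R j" and k: "wR R k < t" and j: "j < length k"
  shows "\<bar>real_of_int (k ! j)\<bar> \<le> t powr (1 / (2 * r))"
proof (cases "k ! j = 0")
  case False
  let ?x = "\<bar>real_of_int (k ! j)\<bar>"
  have x: "1 \<le> ?x" using False by linarith
  have "?x powr (2 * r) \<le> ?x powr (2 * R j)"
    using x r by (intro powr_mono) auto
  also have "\<dots> \<le> (\<Sum>j<length k. \<bar>real_of_int (k ! j)\<bar> powr (2 * R j))"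
    using j by (intro member_le_sum) auto
  also have "\<dots> < t" using k unfolding wR_def by simp
  finally have "?x powr (2 * r) < t" .
  then have "(?x powr (2 * r)) powr (1 / (2 * r)) \<le> t powr (1 / (2 * r))"
    using r by (intro powr_mono2) auto
  then show ?thesis
    using r x by (simp add: powr_powr)
qed simp

lemma wR_sublevel_subset:
  fixes t :: real
  assumes "0 < r" "\<forall>j. r \<le> R j"
  defines "M \<equiv> \<lfloor>t powr (1 / (2 * r))\<rfloor>"
  shows "{k \<in> idx d. wR R k < t} \<subseteq> {k. length k = d \<and> set k \<subseteq> {-M..M} \<and> nnz k \<le> nat \<lfloor>t\<rfloor>}"
proof clarify
  fix k assume k: "k \<in> idx d" "wR R k < t"
  have "\<forall>j. 0 \<le> R j" using assms(1,2) by (auto intro: order.trans[OF less_imp_le])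
  then have "real (nnz k) < t" using nnz_le_wR[of R k] k(2) by simp
  moreover have "set k \<subseteq> {-M..M}"
  proof
    fix x assume "x \<in> set k"
    then have "\<bar>x\<bar> \<le> M"
      using abs_nth_le_of_wR_less[OF assms(1,2) k(2)]
      by (auto simp: M_def in_set_conv_nth le_floor_iff)
    then show "x \<in> {-M..M}" by auto
  qed
  ultimately show "length k = d \<and> set k \<subseteq> {-M..M} \<and> nnz k \<le> nat \<lfloor>t\<rfloor>"
    using k(1) by (auto simp: idx_def le_nat_floor)
qed

lemma finite_wR_sublevel:
  assumes "0 < r" "\<forall>j. r \<le> R j"
  shows "finite {k \<in> idx d. wR R k < t}"
proof (rule finite_subset[OF wR_sublevel_subset[OF assms]])
  show "finite {k. length k = d \<and> set k \<subseteq> {-\<lfloor>t powr (1 / (2 * r))\<rfloor>..\<lfloor>t powr (1 / (2 * r))\<rfloor>}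
      \<and> nnz k \<le> nat \<lfloor>t\<rfloor>}"
    using finite_lists_length_eq[of "{-\<lfloor>t powr (1 / (2 * r))\<rfloor>..\<lfloor>t powr (1 / (2 * r))\<rfloor>}" d]
    by (rule rev_finite_subset) auto
qed

lemma card_wR_sublevel_le_dense:
  assumes r: "0 < r" "\<forall>j. r \<le> R j" and t: "1 \<le> t"
  shows "real (card {k \<in> idx d. wR R k < t}) \<le> (3 * t powr (1 / (2 * r))) ^ d"
proof -
  define T where "T = t powr (1 / (2 * r))"
  define Y where "Y = {-\<lfloor>T\<rfloor>..\<lfloor>T\<rfloor>}"
  have "1 \<le> T" unfolding T_def using t r by (intro ge_one_powr_ge_zero) auto
  then have "real (card Y) = 2 * real_of_int \<lfloor>T\<rfloor> + 1" by (simp add: Y_def)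
  then have Y: "real (card Y) \<le> 3 * T" using of_int_floor_le[of T] \<open>1 \<le> T\<close> by linarith
  have "{k \<in> idx d. wR R k < t} \<subseteq> {k. set k \<subseteq> Y \<and> length k = d}"
    using wR_sublevel_subset[OF r, where t = t and d = d] by (auto simp: Y_def T_def)
  then have "card {k \<in> idx d. wR R k < t} \<le> card {k. set k \<subseteq> Y \<and> length k = d}"
    by (intro card_mono finite_lists_length_eq) (auto simp: Y_def)
  then have "real (card {k \<in> idx d. wR R k < t}) \<le> real (card Y) ^ d"
    by (simp add: card_lists_length_eq Y_def)
  also have "\<dots> \<le> (3 * T) ^ d" using Y by (intro power_mono) auto
  finally show ?thesis by (simp add: T_def)
qed

lemma card_wR_sublevel_le_sparse:
  assumes r: "0 < r" "\<forall>j. r \<le> R j" and t: "1 \<le> t" and d: "1 \<le> d"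
  shows "real (card {k \<in> idx d. wR R k < t}) \<le> (4 * real d * t powr (1 / (2 * r))) powr t"
proof -
  define T where "T = t powr (1 / (2 * r))"
  define Y where "Y = {-\<lfloor>T\<rfloor>..\<lfloor>T\<rfloor>}"
  define s where "s = nat \<lfloor>t\<rfloor>"
  have "1 \<le> T" unfolding T_def using t r by (intro ge_one_powr_ge_zero) auto
  then have "real (card Y) = 2 * real_of_int \<lfloor>T\<rfloor> + 1" by (simp add: Y_def)
  then have Y: "real (card Y) \<le> 3 * T" using of_int_floor_le[of T] \<open>1 \<le> T\<close> by linarith
  have dT: "1 \<le> real d * T" using mult_mono[of 1 "real d" 1 T] d \<open>1 \<le> T\<close> by simp
  have "{k \<in> idx d. wR R k < t} \<subseteq> {k. length k = d \<and> set k \<subseteq> Y \<and> nnz k \<le> s}"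
    using wR_sublevel_subset[OF r, where t = t and d = d] by (simp add: Y_def T_def s_def)
  then have "card {k \<in> idx d. wR R k < t} \<le> card {k. length k = d \<and> set k \<subseteq> Y \<and> nnz k \<le> s}"
    by (intro card_mono finite_subset[OF _ finite_lists_length_eq[of Y d]]) (auto simp: Y_def)
  also have "\<dots> \<le> (d * card Y + 1) ^ s" by (rule card_sparse_lists_le) (simp add: Y_def)
  finally have "real (card {k \<in> idx d. wR R k < t}) \<le> (real d * real (card Y) + 1) ^ s"
    by (metis of_nat_1 of_nat_add of_nat_le_iff of_nat_mult of_nat_power)
  also have "\<dots> \<le> (4 * real d * T) ^ s"
    using mult_left_mono[OF Y, of "real d"] dT by (intro power_mono) auto
  also have "\<dots> = (4 * real d * T) powr real s"
    using dT by (intro powr_realpow[symmetric]) (simp add: mult.commute)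
  also have "\<dots> \<le> (4 * real d * T) powr t"
    using t dT by (intro powr_mono) (auto simp: s_def)
  finally show ?thesis by (simp add: T_def)
qed

lemma wR_eq_winf_on_cube: "k \<in> cube d \<Longrightarrow> wR R k = winf k"
proof -
  assume k: "k \<in> cube d"
  have "\<bar>real_of_int (k ! j)\<bar> powr (2 * R j) = \<bar>real_of_int (k ! j)\<bar>" if "j < length k" for j
  proof -
    have "k ! j \<in> {-1, 0, 1}" using k that nth_mem by (auto simp: cube_def)
    then show ?thesis by auto
  qed
  then show ?thesis unfolding wR_def winf_def by simp
qed

lemma winf_le_on_cube: "k \<in> cube d \<Longrightarrow> winf k \<le> 1 + real d"
proof -
  assume k: "k \<in> cube d"
  have "\<bar>real_of_int (k ! j)\<bar> \<le> 1" if "j < length k" for j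
  proof -
    have "k ! j \<in> {-1, 0, 1}" using k that nth_mem by (auto simp: cube_def)
    then show ?thesis by auto
  qed
  then have "(\<Sum>j<length k. \<bar>real_of_int (k ! j)\<bar>) \<le> real (length k)"
    using sum_mono[of "{..<length k}" "\<lambda>j. \<bar>real_of_int (k ! j)\<bar>" "\<lambda>_. 1"] by simp
  then show ?thesis using k by (simp add: winf_def cube_def)
qed

lemma cube_eq_lists: "cube d = {k. set k \<subseteq> {-1, 0, 1} \<and> length k = d}"
  by (auto simp: cube_def)

lemma finite_cube: "finite (cube d)"
  unfolding cube_eq_lists by (rule finite_lists_length_eq) simp

lemma card_cube: "card (cube d) = 3 ^ d"
  unfolding cube_eq_lists by (subst card_lists_length_eq) (simp_all add: numeral_3_eq_3)

lemma ln_of_nat_le_ln: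
  assumes "real n \<le> y" "1 \<le> y"
  shows "ln (real n) \<le> ln y"
  using assms by (cases "n = 0") auto

lemma ln_of_nat_mono: "m \<le> n \<Longrightarrow> ln (real m) \<le> ln (real n)"
  by (cases "m = 0"; cases "n = 0") auto

lemma ln_card_wR_sublevel_le:
  assumes r: "0 < r" "\<forall>j. r \<le> R j" and x: "1 \<le> x" and d: "1 \<le> d"
  shows "ln (real (card {k \<in> idx d. wR R k < x\<^sup>2})) \<le> real d * (ln 3 + ln x / r)"
    and "ln (real (card {k \<in> idx d. wR R k < x\<^sup>2})) \<le> x\<^sup>2 * (ln 4 + ln (real d) + ln x / r)"
proof -
  define T where "T = (x\<^sup>2) powr (1 / (2 * r))"
  have T: "T = x powr (1 / r)"
    using x by (simp add: T_def powr_powr flip: powr_numeral)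
  have T1: "1 \<le> T" unfolding T using x r by (intro ge_one_powr_ge_zero) auto
  have lnT: "ln T = ln x / r"
    unfolding T using x by (simp add: ln_powr)
  have t: "1 \<le> x\<^sup>2" using x by (simp add: one_le_power)
  have dT: "1 \<le> 4 * real d * T" using mult_mono[of 1 "real d" 1 T] d T1 by simp
  have "ln (real (card {k \<in> idx d. wR R k < x\<^sup>2})) \<le> ln ((3 * T) ^ d)"
    using card_wR_sublevel_le_dense[OF r t, of d, folded T_def] one_le_power[of "3 * T" d] T1
    by (intro ln_of_nat_le_ln) auto
  also have "\<dots> = real d * (ln 3 + ln x / r)"
    using T1 by (simp add: ln_realpow ln_mult lnT algebra_simps)
  finally show "ln (real (card {k \<in> idx d. wR R k < x\<^sup>2})) \<le> real d * (ln 3 + ln x / r)" .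
  have "ln (real (card {k \<in> idx d. wR R k < x\<^sup>2})) \<le> ln ((4 * real d * T) powr x\<^sup>2)"
    using card_wR_sublevel_le_sparse[OF r t d, folded T_def] ge_one_powr_ge_zero[OF dT, of "x\<^sup>2"]
    by (intro ln_of_nat_le_ln) auto
  also have "\<dots> = x\<^sup>2 * (ln 4 + ln (real d) + ln x / r)"
    using d T1 by (simp add: ln_powr ln_mult lnT algebra_simps)
  finally show "ln (real (card {k \<in> idx d. wR R k < x\<^sup>2})) \<le> x\<^sup>2 * (ln 4 + ln (real d) + ln x / r)" .
qed

section \<open>Minimal errors and weak tractability\<close>

lemma wR_nonneg: "0 \<le> wR R k"
  by (simp add: wR_def sum_nonneg add_nonneg_nonneg)

lemma sqrt_inverse_square: "0 < \<epsilon> \<Longrightarrow> 1 / sqrt (1 / \<epsilon>\<^sup>2) = (\<epsilon> :: real)"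
  by (simp add: real_sqrt_divide)

lemma eR_le:
  assumes "0 < r" "\<forall>j. r \<le> R j" "0 < \<epsilon>"
  shows "eR R (card {k \<in> idx d. wR R k < 1 / \<epsilon>\<^sup>2}) d \<le> ereal \<epsilon>"
proof -
  have "eR R (card {k \<in> idx d. wR R k < 1 / \<epsilon>\<^sup>2}) d \<le> ereal (1 / sqrt (1 / \<epsilon>\<^sup>2))"
    unfolding eR_def using finite_wR_sublevel[OF assms(1,2)] assms(3)
    by (intro min_err_le_inverse_sqrt) (auto simp: wR_nonneg)
  then show ?thesis using sqrt_inverse_square[OF assms(3)] by simp
qed

lemma einf_le:
  assumes "0 < r" "\<forall>j. r \<le> R j" "0 < \<epsilon>"
  shows "einf (card {k \<in> idx d. wR R k < 1 / \<epsilon>\<^sup>2}) d \<le> ereal \<epsilon>"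
proof -
  have fin: "finite {k \<in> idx d. wR R k < 1 / \<epsilon>\<^sup>2}"
    by (rule finite_wR_sublevel[OF assms(1,2)])
  have sub: "{k \<in> cube d. winf k < 1 / \<epsilon>\<^sup>2} \<subseteq> {k \<in> idx d. wR R k < 1 / \<epsilon>\<^sup>2}"
    by (auto simp: wR_eq_winf_on_cube) (auto simp: cube_def idx_def)
  have "einf (card {k \<in> idx d. wR R k < 1 / \<epsilon>\<^sup>2}) d \<le> ereal (1 / sqrt (1 / \<epsilon>\<^sup>2))"
    unfolding einf_def
  proof (rule min_err_le_inverse_sqrt)
    show "\<forall>k\<in>cube d. 0 \<le> winf k" by (simp add: winf_def sum_nonneg add_nonneg_nonneg)
    show "finite {k \<in> cube d. winf k < 1 / \<epsilon>\<^sup>2}" using finite_subset[OF sub fin] .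
    show "card {k \<in> cube d. winf k < 1 / \<epsilon>\<^sup>2} \<le> card {k \<in> idx d. wR R k < 1 / \<epsilon>\<^sup>2}"
      by (rule card_mono[OF fin sub])
  qed (use assms(3) in simp)
  then show ?thesis using sqrt_inverse_square[OF assms(3)] by simp
qed

lemma eR_ge: "n < 3 ^ d \<Longrightarrow> ereal (1 / sqrt (1 + real d)) \<le> eR R n d"
  unfolding eR_def
  by (rule min_err_ge_inverse_sqrt[of "cube d"])
     (auto simp: finite_cube card_cube wR_eq_winf_on_cube winf_le_on_cube, auto simp: cube_def idx_def)

lemma einf_ge: "n < 3 ^ d \<Longrightarrow> ereal (1 / sqrt (1 + real d)) \<le> einf n d"
  unfolding einf_def
  by (rule min_err_ge_inverse_sqrt[of "cube d"]) (auto simp: finite_cube card_cube winf_le_on_cube)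

lemma info_compl_le: "e n d \<le> ereal \<epsilon> \<Longrightarrow> info_compl e \<epsilon> d \<le> n"
  unfolding info_compl_def by (rule Least_le)

lemma le_info_compl:
  assumes "e m d \<le> ereal \<epsilon>" "\<And>n. n < N \<Longrightarrow> ereal \<epsilon> < e n d"
  shows "N \<le> info_compl e \<epsilon> d"
proof (rule ccontr)
  assume "\<not> N \<le> info_compl e \<epsilon> d"
  moreover have "e (info_compl e \<epsilon> d) d \<le> ereal \<epsilon>"
    unfolding info_compl_def by (rule LeastI[of _ m]) (rule assms(1))
  ultimately show False using assms(2) by (meson leD not_le)
qed

lemma le_powr_inverse_sum:
  fixes x y a :: real
  assumes "0 < x" "0 < a" "0 \<le> y"
  shows "x \<le> (x powr a + y) powr (1 / a)"
proof -
  have "x = (x powr a) powr (1 / a)" using assms by (simp add: powr_powr)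
  also have "\<dots> \<le> (x powr a + y) powr (1 / a)" using assms by (intro powr_mono2) auto
  finally show ?thesis .
qed

lemma ln_info_compl_le:
  assumes r: "0 < r" "\<forall>j. r \<le> R j" and \<alpha>: "0 < \<alpha>" and \<beta>: "0 < \<beta>"
    and upper: "\<And>\<epsilon> d. 0 < \<epsilon> \<Longrightarrow> E (card {k \<in> idx d. wR R k < 1 / \<epsilon>\<^sup>2}) d \<le> ereal \<epsilon>"
    and \<epsilon>: "0 < \<epsilon>" "\<epsilon> < 1" and d: "1 \<le> d"
  defines "u \<equiv> \<epsilon> powr - \<alpha> + real d powr \<beta>" and "K \<equiv> 1 / \<beta> + 1 / (\<alpha> * r)"
  shows "ln (real (info_compl E \<epsilon> d)) \<le> u powr (1 / \<beta>) * (ln 4 + K * ln u)"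
    and "ln (real (info_compl E \<epsilon> d)) \<le> u powr (2 / \<alpha>) * (ln 4 + K * ln u)"
proof -
  define x where "x = 1 / \<epsilon>"
  have x: "1 < x" using \<epsilon> by (simp add: x_def)
  have u: "u = x powr \<alpha> + real d powr \<beta>"
    using \<epsilon> by (simp add: u_def x_def powr_minus_divide powr_divide)
  have u1: "1 \<le> u"
    unfolding u using ge_one_powr_ge_zero[of x \<alpha>] powr_ge_zero[of "real d" \<beta>] x \<alpha> by linarith
  have xu: "x \<le> u powr (1 / \<alpha>)"
    unfolding u using x \<alpha> by (intro le_powr_inverse_sum) auto
  have du: "real d \<le> u powr (1 / \<beta>)"
    unfolding u using d \<beta> le_powr_inverse_sum[of "real d" \<beta> "x powr \<alpha>"] by (simp add: add.commute)
  have ln_x: "ln x / r \<le> ln u / (\<alpha> * r)"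
  proof -
    have "ln x \<le> ln (u powr (1 / \<alpha>))" using xu x by (subst ln_le_cancel_iff) auto
    also have "\<dots> = ln u / \<alpha>" using u1 by (simp add: ln_powr)
    finally show ?thesis using r by (simp add: divide_right_mono flip: divide_divide_eq_left)
  qed
  have ln_d: "ln (real d) \<le> ln u / \<beta>"
  proof -
    have "ln (real d) \<le> ln (u powr (1 / \<beta>))" using du d by (subst ln_le_cancel_iff) auto
    also have "\<dots> = ln u / \<beta>" using u1 by (simp add: ln_powr)
    finally show ?thesis .
  qed
  have K: "K * ln u = ln u / \<beta> + ln u / (\<alpha> * r)" by (simp add: K_def field_simps)
  have ln_u: "0 \<le> ln u / \<beta>" using u1 \<beta> by simp
  have n: "info_compl E \<epsilon> d \<le> card {k \<in> idx d. wR R k < x\<^sup>2}"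
    using info_compl_le[where e = E, OF upper[OF \<epsilon>(1), of d]] by (simp add: x_def power_one_over)
  then have ln_n: "ln (real (info_compl E \<epsilon> d)) \<le> ln (real (card {k \<in> idx d. wR R k < x\<^sup>2}))"
    by (rule ln_of_nat_mono)
  have "ln (real (card {k \<in> idx d. wR R k < x\<^sup>2})) \<le> real d * (ln 3 + ln x / r)"
    using ln_card_wR_sublevel_le(1)[OF r _ d] x by simp
  also have "\<dots> \<le> u powr (1 / \<beta>) * (ln 4 + K * ln u)"
  proof (intro mult_mono)
    have "ln 3 \<le> (ln 4 :: real)" by simp
    then show "ln 3 + ln x / r \<le> ln 4 + K * ln u" using ln_x ln_u K by linarith
  qed (use du x r in auto)
  finally show "ln (real (info_compl E \<epsilon> d)) \<le> u powr (1 / \<beta>) * (ln 4 + K * ln u)"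
    using ln_n by simp
  have "ln (real (card {k \<in> idx d. wR R k < x\<^sup>2})) \<le> x\<^sup>2 * (ln 4 + ln (real d) + ln x / r)"
    using ln_card_wR_sublevel_le(2)[OF r _ d] x by simp
  also have "\<dots> \<le> u powr (2 / \<alpha>) * (ln 4 + K * ln u)"
  proof (intro mult_mono)
    have "x\<^sup>2 \<le> (u powr (1 / \<alpha>))\<^sup>2" using xu x by (intro power_mono) auto
    then show "x\<^sup>2 \<le> u powr (2 / \<alpha>)" using u1 by (simp add: powr_powr flip: powr_numeral)
    show "ln 4 + ln (real d) + ln x / r \<le> ln 4 + K * ln u" using ln_d ln_x K by simp
    show "0 \<le> ln 4 + ln (real d) + ln x / r" using d x r by simp
  qed simp
  finally show "ln (real (info_compl E \<epsilon> d)) \<le> u powr (2 / \<alpha>) * (ln 4 + K * ln u)"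
    using ln_n by simp
qed

lemma ab_weakly_tractable_if_ln_info_compl_le:
  fixes g :: "real \<Rightarrow> real"
  assumes \<alpha>: "0 < \<alpha>" and \<beta>: "0 < \<beta>" and g: "((\<lambda>u. g u / u) \<longlongrightarrow> 0) at_top"
    and bound: "\<And>\<epsilon> d. 0 < \<epsilon> \<Longrightarrow> \<epsilon> < 1 \<Longrightarrow> 1 \<le> d \<Longrightarrow>
      ln (real (info_compl E \<epsilon> d)) \<le> g (\<epsilon> powr - \<alpha> + real d powr \<beta>)"
  shows "ab_weakly_tractable E \<alpha> \<beta>"
  unfolding ab_weakly_tractable_def
proof (intro allI impI)
  fix \<delta> :: real assume "0 < \<delta>"
  obtain U where U: "\<And>u. U \<le> u \<Longrightarrow> \<bar>g u / u\<bar> < \<delta>"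
    using tendstoD[OF g \<open>0 < \<delta>\<close>] by (auto simp: eventually_at_top_linorder)
  define V where "V = max U 1"
  have V: "U \<le> V" "1 \<le> V" by (auto simp: V_def)
  show "\<exists>M. \<forall>\<epsilon> d. 0 < \<epsilon> \<and> \<epsilon> < 1 \<and> 1 \<le> d \<and> M < 1 / \<epsilon> + real d \<longrightarrow>
      \<bar>ln (real (info_compl E \<epsilon> d)) / (\<epsilon> powr - \<alpha> + real d powr \<beta>)\<bar> < \<delta>"
  proof (intro exI[of _ "V powr (1 / \<alpha>) + V powr (1 / \<beta>)"] allI impI, elim conjE)
    fix \<epsilon> :: real and d :: nat
    assume \<epsilon>: "0 < \<epsilon>" "\<epsilon> < 1" and d: "1 \<le> d"
      and large: "V powr (1 / \<alpha>) + V powr (1 / \<beta>) < 1 / \<epsilon> + real d"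
    define u where "u = \<epsilon> powr - \<alpha> + real d powr \<beta>"
    have "V \<le> u"
    proof (cases "V powr (1 / \<alpha>) < 1 / \<epsilon>")
      case True
      have "V = (V powr (1 / \<alpha>)) powr \<alpha>" using \<alpha> V by (simp add: powr_powr)
      also have "\<dots> < (1 / \<epsilon>) powr \<alpha>" using True \<alpha> by (intro powr_less_mono2) auto
      also have "\<dots> = \<epsilon> powr - \<alpha>" using \<epsilon> by (simp add: powr_minus_divide powr_divide)
      finally show ?thesis unfolding u_def using powr_ge_zero[of "real d" \<beta>] by linarith
    next
      case False
      then have "V powr (1 / \<beta>) < real d" using large by linarith
      have "V = (V powr (1 / \<beta>)) powr \<beta>" using \<beta> V by (simp add: powr_powr)
      also have "\<dots> < real d powr \<beta>"
        using \<open>V powr (1 / \<beta>) < real d\<close> \<beta> by (intro powr_less_mono2) auto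
      finally show ?thesis unfolding u_def using powr_ge_zero[of \<epsilon> "- \<alpha>"] by linarith
    qed
    then have u: "U \<le> u" "0 < u" using V by auto
    have "0 \<le> ln (real (info_compl E \<epsilon> d))" using ln_of_nat_mono[of 0] by simp
    then have "\<bar>ln (real (info_compl E \<epsilon> d)) / u\<bar> = ln (real (info_compl E \<epsilon> d)) / u"
      using u by simp
    also have "\<dots> \<le> g u / u"
      using bound[OF \<epsilon> d] u by (simp add: u_def divide_right_mono)
    also have "\<dots> < \<delta>" using U[OF u(1)] abs_ge_self[of "g u / u"] by linarith
    finally show "\<bar>ln (real (info_compl E \<epsilon> d)) / (\<epsilon> powr - \<alpha> + real d powr \<beta>)\<bar> < \<delta>"
      by (simp add: u_def)
  qed
qed

lemma not_ab_weakly_tractable_if_exponential: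
  assumes \<alpha>: "\<alpha> \<le> 2" and \<beta>: "\<beta> \<le> 1"
    and lower: "\<And>d. 3 ^ d \<le> info_compl E (1 / sqrt (real d + 2)) d"
  shows "\<not> ab_weakly_tractable E \<alpha> \<beta>"
proof
  assume "ab_weakly_tractable E \<alpha> \<beta>"
  then obtain M where M: "\<And>\<epsilon> d. 0 < \<epsilon> \<Longrightarrow> \<epsilon> < 1 \<Longrightarrow> 1 \<le> d \<Longrightarrow> M < 1 / \<epsilon> + real d \<Longrightarrow>
      \<bar>ln (real (info_compl E \<epsilon> d)) / (\<epsilon> powr - \<alpha> + real d powr \<beta>)\<bar> < 1 / 4"
    unfolding ab_weakly_tractable_def by (meson zero_less_divide_1_iff zero_less_numeral)
  define d where "d = nat \<lceil>max M 1\<rceil> + 1"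
  define \<epsilon> where "\<epsilon> = 1 / sqrt (real d + 2)"
  define u where "u = \<epsilon> powr - \<alpha> + real d powr \<beta>"
  have d: "1 \<le> d" "M < real d" unfolding d_def by linarith+
  have \<epsilon>: "0 < \<epsilon>" "\<epsilon> < 1" by (simp_all add: \<epsilon>_def)
  have "\<epsilon> powr - \<alpha> = sqrt (real d + 2) powr \<alpha>"
    by (simp add: \<epsilon>_def powr_minus_divide powr_divide)
  also have "\<dots> \<le> sqrt (real d + 2) powr 2" using \<alpha> by (intro powr_mono) auto
  also have "\<dots> = real d + 2" by (simp add: powr_numeral)
  finally have "\<epsilon> powr - \<alpha> \<le> real d + 2" .
  moreover have "real d powr \<beta> \<le> real d"
    using powr_mono[OF \<beta>, of "real d"] d by simp
  ultimately have "u \<le> 4 * real d" using d by (simp add: u_def)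
  also have "\<dots> \<le> 4 * (real d * ln 3)" using ln3_gt_1 d by simp
  also have "\<dots> = 4 * ln (real (3 ^ d))" by (simp add: ln_realpow)
  also have "\<dots> \<le> 4 * ln (real (info_compl E \<epsilon> d))"
    using ln_of_nat_mono[OF lower[of d]] by (simp add: \<epsilon>_def)
  finally have "1 / 4 \<le> ln (real (info_compl E \<epsilon> d)) / u"
    using \<epsilon> by (simp add: u_def field_simps add_pos_nonneg)
  moreover have "M < 1 / \<epsilon> + real d" using d \<epsilon> by (simp add: add_pos_nonneg less_le_trans)
  then have "\<bar>ln (real (info_compl E \<epsilon> d)) / u\<bar> < 1 / 4"
    unfolding u_def by (rule M[OF \<epsilon> d(1)])
  ultimately show False
    using abs_ge_self[of "ln (real (info_compl E \<epsilon> d)) / u"] by linarith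
qed

lemma ab_weakly_tractable_iff:
  assumes r: "0 < r" "\<forall>j. r \<le> R j" and \<alpha>: "0 < \<alpha>" and \<beta>: "0 < \<beta>"
    and upper: "\<And>\<epsilon> d. 0 < \<epsilon> \<Longrightarrow> E (card {k \<in> idx d. wR R k < 1 / \<epsilon>\<^sup>2}) d \<le> ereal \<epsilon>"
    and lower: "\<And>n d. n < 3 ^ d \<Longrightarrow> ereal (1 / sqrt (1 + real d)) \<le> E n d"
  shows "ab_weakly_tractable E \<alpha> \<beta> \<longleftrightarrow> 2 < \<alpha> \<or> 1 < \<beta>"
proof
  have "3 ^ d \<le> info_compl E (1 / sqrt (real d + 2)) d" for d
  proof (rule le_info_compl)
    show "E (card {k \<in> idx d. wR R k < 1 / (1 / sqrt (real d + 2))\<^sup>2}) d \<le> ereal (1 / sqrt (real d + 2))"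
      by (rule upper) simp
    have "ereal (1 / sqrt (real d + 2)) < ereal (1 / sqrt (1 + real d))"
      by (simp add: divide_strict_left_mono)
    then show "ereal (1 / sqrt (real d + 2)) < E n d" if "n < 3 ^ d" for n
      using lower[OF that] by (rule less_le_trans)
  qed
  then show "ab_weakly_tractable E \<alpha> \<beta> \<Longrightarrow> 2 < \<alpha> \<or> 1 < \<beta>"
    using not_ab_weakly_tractable_if_exponential[of \<alpha> \<beta> E] by fastforce
next
  assume "2 < \<alpha> \<or> 1 < \<beta>"
  \<comment> \<open>the first bound of \<open>ln_info_compl_le\<close> is sublinear in \<open>u\<close> when \<open>1 < \<beta>\<close>, the second when \<open>2 < \<alpha>\<close>\<close>
  define p where "p = (if 1 < \<beta> then 1 / \<beta> else 2 / \<alpha>)"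
  define K where "K = 1 / \<beta> + 1 / (\<alpha> * r)"
  have "p < 1" using \<open>2 < \<alpha> \<or> 1 < \<beta>\<close> \<alpha> by (auto simp: p_def)
  then have "((\<lambda>u. u powr p * (ln 4 + K * ln u) / u) \<longlongrightarrow> 0) at_top"
    by real_asymp
  then show "ab_weakly_tractable E \<alpha> \<beta>"
  proof (rule ab_weakly_tractable_if_ln_info_compl_le[OF \<alpha> \<beta>])
    fix \<epsilon> :: real and d :: nat assume "0 < \<epsilon>" "\<epsilon> < 1" "1 \<le> d"
    from ln_info_compl_le[OF r \<alpha> \<beta> upper this]
    show "ln (real (info_compl E \<epsilon> d)) \<le> (\<epsilon> powr - \<alpha> + real d powr \<beta>) powr p *
        (ln 4 + K * ln (\<epsilon> powr - \<alpha> + real d powr \<beta>))"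
      by (simp add: p_def K_def)
  qed
qed

theorem theorem2p4:
  fixes R :: "nat \<Rightarrow> real" and \<alpha> \<beta> :: real
  assumes "\<forall>j. R j > 0" and "(INF j. R j) > 0"
    and "\<alpha> > 0" and "\<beta> > 0"
  shows "(ab_weakly_tractable (eR R) \<alpha> \<beta> \<longleftrightarrow> (\<alpha> > 2 \<and> \<beta> > 0) \<or> (\<alpha> > 0 \<and> \<beta> > 1))
       \<and> (ab_weakly_tractable einf \<alpha> \<beta> \<longleftrightarrow> (\<alpha> > 2 \<and> \<beta> > 0) \<or> (\<alpha> > 0 \<and> \<beta> > 1))
       \<and> \<not> weakly_tractable (eR R) \<and> \<not> weakly_tractable einf"
proof -
  define r where "r = (INF j. R j)"
  have "r \<le> R j" for j
    unfolding r_def using assms(1) by (intro cINF_lower bdd_belowI[of _ 0]) (auto simp: less_imp_le)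
  then have r: "0 < r" "\<forall>j. r \<le> R j" using assms(2) by (auto simp: r_def)
  have eR: "ab_weakly_tractable (eR R) a b \<longleftrightarrow> 2 < a \<or> 1 < b" if "0 < a" "0 < b" for a b
    using ab_weakly_tractable_iff[OF r that, of "eR R"] eR_le[OF r] eR_ge by blast
  have einf: "ab_weakly_tractable einf a b \<longleftrightarrow> 2 < a \<or> 1 < b" if "0 < a" "0 < b" for a b
    using ab_weakly_tractable_iff[OF r that, of einf] einf_le[OF r] einf_ge by blast
  show ?thesis
    using eR[OF assms(3,4)] einf[OF assms(3,4)] eR[of 1 1] einf[of 1 1] assms(3,4)
    by (auto simp: weakly_tractable_def)
qed

end
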